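(* The family of decidable safety constraints is a family with a universal detector, i.e. there is a detector $u$ such that $\{C_u(x):x\in|u|\}$ is exactly the set of decidable safety constraints.
   Context: Fix a finite nonempty set $N$; $N^+$ the nonempty finite words, $N^{\mathbb N}$ the streams; $s[m{:}]$ the suffix; $n^{-1}\cdot A=\{u:nu\in A\}$; a set of words is prefix-free if no proper prefix (including the empty word) of a member is a member. Let $\mathbf 1=\{\Downarrow\}$. A detector is a set $|a|$ with $a:|a|\to(\mathbf 1+|a|)^N$. The final detector $\omega$ has carrier $\Omega$ = the set of prefix-free subsets of $N^+$, with $\omega(P)(n)=\Downarrow$ if $n\in P$, else $n^{-1}\cdot P$. For $s\in N^{\mathbb N}$, $\mathrm{Join}([s],a)$ maps $(t,y)\in\{s[k{:}]\}\times|a|$ to $\Downarrow$ if $a(y)(t(0))=\Downarrow$, else $(t[1{:}],a(y)(t(0)))$; iterates $g^{(1)}=g$, $g^{(k+1)}(z)=\Downarrow$ if $g^{(k)}(z)=\Downarrow$, else $g(g^{(k)}(z))$. $C_a(x)=\{s:\mathrm{Join}([s],a)^{(k)}(s,x)\ne\Downarrow\ \forall k\ge1\}$. A safety constraint $S$ is decidable if $S=C_\omega(P)$ for some $P\in\Omega$ that is a decidable (recursive) set of words. A family $\mathcal F$ of safety constraints is a family with a universal detector if $\mathcal F=\{C_a(x):x\in|a|\}$ for some detector $a$. *)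

theory Defs
  imports Main "HOL-Library.Nat_Bijection"
begin

(* Streams over the alphabet 'n are functions nat \<Rightarrow> 'n; s[m:] is suffix s m. *)
definition suffix :: "(nat \<Rightarrow> 'n) \<Rightarrow> nat \<Rightarrow> (nat \<Rightarrow> 'n)" where
  "suffix s m = (\<lambda>i. s (i + m))"

(* A detector: carrier A and transition a : A \<Rightarrow> (1 + A)^N, with None playing
   the role of the distinguished element \<Down>. *)
definition detector :: "'s set \<Rightarrow> ('s \<Rightarrow> 'n \<Rightarrow> 's option) \<Rightarrow> bool" where
  "detector A a \<longleftrightarrow> (\<forall>x\<in>A. \<forall>n. \<forall>y. a x n = Some y \<longrightarrow> y \<in> A)"

definition join :: "('s \<Rightarrow> 'n \<Rightarrow> 's option) \<Rightarrow> (nat \<Rightarrow> 'n) \<times> 's \<Rightarrow> ((nat \<Rightarrow> 'n) \<times> 's) option" where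
  "join a z = (case a (snd z) (fst z 0) of
                 None \<Rightarrow> None
               | Some y' \<Rightarrow> Some (suffix (fst z) 1, y'))"

(* iter g k = g^(k+1) *)
primrec iter :: "('z \<Rightarrow> 'z option) \<Rightarrow> nat \<Rightarrow> 'z \<Rightarrow> 'z option" where
  "iter g 0 z = g z"
| "iter g (Suc k) z = (case iter g k z of None \<Rightarrow> None | Some z' \<Rightarrow> g z')"

definition constraint :: "('s \<Rightarrow> 'n \<Rightarrow> 's option) \<Rightarrow> 's \<Rightarrow> (nat \<Rightarrow> 'n) set" where
  "constraint a x = {s. \<forall>k\<ge>1. iter (join a) (k - 1) (s, x) \<noteq> None}"

definition prefix_free :: "'n list set \<Rightarrow> bool" where
  "prefix_free P \<longleftrightarrow> (\<forall>u v. u @ v \<in> P \<and> v \<noteq> [] \<longrightarrow> u \<notin> P)"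

definition Omega :: "'n list set set" where
  "Omega = {P. P \<subseteq> {w. w \<noteq> []} \<and> prefix_free P}"

definition omega :: "'n list set \<Rightarrow> 'n \<Rightarrow> 'n list set option" where
  "omega P n = (if [n] \<in> P then None else Some {u. n # u \<in> P})"

fun prec :: "(nat list \<Rightarrow> nat) \<Rightarrow> (nat list \<Rightarrow> nat) \<Rightarrow> nat \<Rightarrow> nat list \<Rightarrow> nat" where
  "prec f g 0 xs = f xs"
| "prec f g (Suc y) xs = g (y # prec f g y xs # xs)"

inductive total_rec :: "nat \<Rightarrow> (nat list \<Rightarrow> nat) \<Rightarrow> bool" where
  zero: "total_rec n (\<lambda>_. 0)"
| succ: "total_rec 1 (\<lambda>xs. Suc (hd xs))"
| proj: "i < n \<Longrightarrow> total_rec n (\<lambda>xs. xs ! i)"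
| comp: "total_rec m f \<Longrightarrow> length gs = m \<Longrightarrow> (\<forall>g\<in>set gs. total_rec n g)
           \<Longrightarrow> total_rec n (\<lambda>xs. f (map (\<lambda>g. g xs) gs))"
| prim_rec: "total_rec n f \<Longrightarrow> total_rec (Suc (Suc n)) g
           \<Longrightarrow> total_rec (Suc n) (\<lambda>xs. prec f g (hd xs) (tl xs))"
| mu: "total_rec (Suc n) f \<Longrightarrow> (\<forall>xs. length xs = n \<longrightarrow> (\<exists>y. f (y # xs) = 0))
           \<Longrightarrow> total_rec n (\<lambda>xs. LEAST y. f (y # xs) = 0)"

definition sym_code :: "'n::finite \<Rightarrow> nat" where
  "sym_code = (SOME f. bij_betw f (UNIV :: 'n set) {..<card (UNIV :: 'n set)})"

definition word_code :: "'n::finite list \<Rightarrow> nat" where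
  "word_code w = list_encode (map sym_code w)"

definition decidable_words :: "'n::finite list set \<Rightarrow> bool" where
  "decidable_words P \<longleftrightarrow>
     (\<exists>f. total_rec 1 f \<and> (\<forall>w. f [word_code w] = (if w \<in> P then 1 else 0)))"

definition decidable_safety :: "(nat \<Rightarrow> 'n::finite) set \<Rightarrow> bool" where
  "decidable_safety S \<longleftrightarrow> (\<exists>P\<in>Omega. decidable_words P \<and> S = constraint omega P)"

end

theory Submission
  imports Defs
begin

text \<open>The universal detector is the final detector restricted to the decidable prefix-free
  sets of words. This carrier is closed under the transitions of the final detector, because
  the derivative \<open>n\<^sup>-\<^sup>1\<cdot>P\<close> of a decidable set is again decidable: in the list encoding,
  \<open>n # w\<close> has code \<open>Suc (prod_encode (code n, code w))\<close>, which is primitive recursive in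
  the code of \<open>w\<close>.\<close>

definition computable :: "nat \<Rightarrow> (nat list \<Rightarrow> nat) \<Rightarrow> bool" where
  "computable n F \<longleftrightarrow> (\<exists>f. total_rec n f \<and> (\<forall>xs. length xs = n \<longrightarrow> f xs = F xs))"

lemma computable_cong:
  "computable n F \<Longrightarrow> (\<And>xs. length xs = n \<Longrightarrow> F xs = G xs) \<Longrightarrow> computable n G"
  unfolding computable_def by metis

lemma total_rec_imp_computable: "total_rec n f \<Longrightarrow> computable n f"
  unfolding computable_def by blast

lemma computable_proj: "i < n \<Longrightarrow> computable n (\<lambda>xs. xs ! i)"
  by (rule total_rec_imp_computable, rule total_rec.proj)

lemma computable_Suc: "computable 1 (\<lambda>xs. Suc (xs ! 0))"
  unfolding computable_def using total_rec.succ
  by (intro exI[of _ "\<lambda>xs. Suc (hd xs)"]) (auto simp: hd_conv_nth length_Suc_conv)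

lemma computable_list:
  assumes "\<forall>G\<in>set Gs. computable n G"
  shows "\<exists>gs. length gs = length Gs \<and> (\<forall>g\<in>set gs. total_rec n g)
           \<and> (\<forall>xs. length xs = n \<longrightarrow> map (\<lambda>g. g xs) gs = map (\<lambda>G. G xs) Gs)"
  using assms
proof (induction Gs)
  case Nil
  then show ?case by auto
next
  case (Cons G Gs)
  then obtain gs where "length gs = length Gs" "\<forall>g\<in>set gs. total_rec n g"
     "\<forall>xs. length xs = n \<longrightarrow> map (\<lambda>g. g xs) gs = map (\<lambda>G. G xs) Gs"
    by auto
  moreover obtain g where "total_rec n g" "\<forall>xs. length xs = n \<longrightarrow> g xs = G xs"
    using Cons.prems unfolding computable_def by auto
  ultimately show ?case by (intro exI[of _ "g # gs"]) auto
qed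

lemma computable_comp:
  assumes "computable m F" "length Gs = m" "\<forall>G\<in>set Gs. computable n G"
  shows "computable n (\<lambda>xs. F (map (\<lambda>G. G xs) Gs))"
proof -
  obtain f where f: "total_rec m f" "\<forall>xs. length xs = m \<longrightarrow> f xs = F xs"
    using assms(1) unfolding computable_def by auto
  obtain gs where gs: "length gs = length Gs" "\<forall>g\<in>set gs. total_rec n g"
     "\<forall>xs. length xs = n \<longrightarrow> map (\<lambda>g. g xs) gs = map (\<lambda>G. G xs) Gs"
    using computable_list[OF assms(3)] by auto
  have "total_rec n (\<lambda>xs. f (map (\<lambda>g. g xs) gs))"
    using total_rec.comp[OF f(1)] gs assms(2) by auto
  moreover have "\<forall>xs. length xs = n \<longrightarrow> f (map (\<lambda>g. g xs) gs) = F (map (\<lambda>G. G xs) Gs)"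
    using f(2) gs(3) assms(2) by auto
  ultimately show ?thesis unfolding computable_def by blast
qed

lemma computable_comp1:
  "computable 1 F \<Longrightarrow> computable n G \<Longrightarrow> computable n (\<lambda>xs. F [G xs])"
  using computable_comp[of 1 F "[G]" n] by simp

lemma computable_comp2:
  "computable 2 F \<Longrightarrow> computable n G \<Longrightarrow> computable n H \<Longrightarrow> computable n (\<lambda>xs. F [G xs, H xs])"
  using computable_comp[of 2 F "[G, H]" n] by simp

lemma computable_const: "computable n (\<lambda>_. c)"
proof (induction c)
  case 0
  then show ?case by (rule total_rec_imp_computable[OF total_rec.zero])
next
  case (Suc c)
  from computable_comp1[OF computable_Suc Suc] show ?case by simp
qed

lemma prec_cong:
  assumes "\<forall>xs. length xs = n \<longrightarrow> f xs = F xs"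
    and "\<forall>xs. length xs = Suc (Suc n) \<longrightarrow> g xs = G xs"
    and "length xs = n"
  shows "prec f g y xs = prec F G y xs"
  using assms by (induction y) auto

lemma computable_prec:
  assumes "computable n F" "computable (Suc (Suc n)) G"
  shows "computable (Suc n) (\<lambda>xs. prec F G (hd xs) (tl xs))"
proof -
  obtain f where f: "total_rec n f" "\<forall>xs. length xs = n \<longrightarrow> f xs = F xs"
    using assms(1) unfolding computable_def by auto
  obtain g where g: "total_rec (Suc (Suc n)) g" "\<forall>xs. length xs = Suc (Suc n) \<longrightarrow> g xs = G xs"
    using assms(2) unfolding computable_def by auto
  show ?thesis
    unfolding computable_def
    using total_rec.prim_rec[OF f(1) g(1)] prec_cong[OF f(2) g(2)]
    by (intro exI[of _ "\<lambda>xs. prec f g (hd xs) (tl xs)"]) auto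
qed

lemma computable_add: "computable 2 (\<lambda>xs. xs ! 0 + xs ! 1)"
proof -
  let ?step = "\<lambda>xs. Suc (xs ! 1)"
  have "computable (Suc (Suc 1)) ?step"
    using computable_comp1[OF computable_Suc computable_proj[of 1 3]]
    by (simp add: numeral_eq_Suc)
  then have rec: "computable 2 (\<lambda>xs. prec (\<lambda>xs. xs ! 0) ?step (hd xs) (tl xs))"
    using computable_prec[OF computable_proj[of 0 1]] by (simp add: numeral_2_eq_2)
  have unfold: "prec (\<lambda>xs. xs ! 0) ?step y [b] = y + b" for y b
    by (induction y) auto
  show ?thesis
  proof (rule computable_cong[OF rec])
    fix xs :: "nat list"
    assume "length xs = 2"
    then obtain a b where "xs = [a, b]"
      by (metis numeral_2_eq_2 length_0_conv length_Suc_conv)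
    then show "prec (\<lambda>xs. xs ! 0) ?step (hd xs) (tl xs) = xs ! 0 + xs ! 1"
      using unfold by simp
  qed
qed

lemma computable_triangle: "computable 1 (\<lambda>xs. triangle (xs ! 0))"
proof -
  let ?step = "\<lambda>xs. xs ! 1 + Suc (xs ! 0)"
  have "computable 2 ?step"
    using computable_comp2[OF computable_add computable_proj[of 1 2]
        computable_comp1[OF computable_Suc computable_proj[of 0 2]]]
    by simp
  then have rec: "computable 1 (\<lambda>xs. prec (\<lambda>_. 0) ?step (hd xs) (tl xs))"
    using computable_prec[OF computable_const[of 0 0]] by (simp add: numeral_eq_Suc)
  have unfold: "prec (\<lambda>_. 0) ?step y [] = triangle y" for y
    by (induction y) auto
  show ?thesis
  proof (rule computable_cong[OF rec])
    fix xs :: "nat list"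
    assume "length xs = 1"
    then obtain a where "xs = [a]"
      by (metis One_nat_def length_0_conv length_Suc_conv)
    then show "prec (\<lambda>_. 0) ?step (hd xs) (tl xs) = triangle (xs ! 0)"
      using unfold by simp
  qed
qed

lemma computable_list_encode_Cons: "computable 1 (\<lambda>xs. list_encode (c # list_decode (xs ! 0)))"
proof -
  have "computable 1 (\<lambda>xs. c + xs ! 0)"
    using computable_comp2[OF computable_add computable_const computable_proj[of 0 1]] by simp
  then have "computable 1 (\<lambda>xs. triangle (c + xs ! 0) + c)"
    using computable_comp2[OF computable_add computable_comp1[OF computable_triangle]
        computable_const] by simp
  then have "computable 1 (\<lambda>xs. Suc (triangle (c + xs ! 0) + c))"
    using computable_comp1[OF computable_Suc] by simp
  then show ?thesis
    by (simp add: prod_encode_def)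
qed

lemma decidable_words_derivative:
  assumes "decidable_words (P :: 'n::finite list set)"
  shows "decidable_words {u. n # u \<in> P}"
proof -
  obtain f where f: "total_rec 1 f" "\<forall>w. f [word_code w] = (if w \<in> P then 1 else 0)"
    using assms unfolding decidable_words_def by auto
  let ?Cons_code = "\<lambda>xs. list_encode (sym_code n # list_decode (xs ! 0))"
  obtain g where g: "total_rec 1 g" "\<forall>xs. length xs = 1 \<longrightarrow> g xs = f [?Cons_code xs]"
    using computable_comp1[OF total_rec_imp_computable[OF f(1)] computable_list_encode_Cons]
    unfolding computable_def by auto
  have "word_code (n # w) = ?Cons_code [word_code w]" for w
    by (simp add: word_code_def)
  then have "g [word_code w] = (if w \<in> {u. n # u \<in> P} then 1 else 0)" for w
    using g(2) f(2)[rule_format, of "n # w"] by simp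
  with g(1) show ?thesis
    unfolding decidable_words_def by blast
qed

lemma omega_step_in_Omega:
  assumes "P \<in> Omega" "omega P n = Some Q"
  shows "Q \<in> Omega"
proof -
  from assms(2) have "[n] \<notin> P" and Q: "Q = {u. n # u \<in> P}"
    unfolding omega_def by (auto split: if_splits)
  then have "Q \<subseteq> {w. w \<noteq> []}"
    by auto
  moreover have "prefix_free Q"
    using assms(1) unfolding Q Omega_def prefix_free_def
    by (metis (mono_tags, lifting) Cons_eq_appendI mem_Collect_eq)
  ultimately show ?thesis
    by (simp add: Omega_def)
qed

lemma detector_omega_decidable:
  "detector {P :: 'n::finite list set. P \<in> Omega \<and> decidable_words P} omega"
  unfolding detector_def
  using omega_step_in_Omega decidable_words_derivative
  by (fastforce simp: omega_def split: if_splits)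

theorem mainTheorem18:
  shows "\<exists>(U :: 'n::finite list set set) u.
           detector U u \<and>
           {constraint u x | x. x \<in> U} = {S :: (nat \<Rightarrow> 'n) set. decidable_safety S}"
proof (intro exI conjI)
  show "detector {P :: 'n list set. P \<in> Omega \<and> decidable_words P} omega"
    by (rule detector_omega_decidable)
  show "{constraint omega x | x. x \<in> {P. P \<in> Omega \<and> decidable_words P}}
      = {S :: (nat \<Rightarrow> 'n) set. decidable_safety S}"
    unfolding decidable_safety_def by blast
qed

end
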